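(* The reachability problem for probabilistic open channel systems is undecidable: there is no algorithm that, given a pOCS $\mathcal S$ and two configurations $(q_0,\nu_0)$ and $(q_f,\nu_f)$, decides whether $(q_f,\nu_f)$ is reachable from $(q_0,\nu_0)$.
   Context: For an alphabet $\Sigma$, $\lambda$ is the empty word and $\Sigma_\lambda=\Sigma\cup\{\lambda\}$. A probabilistic open channel system (pOCS) $\mathcal S=(Q,Ch,\Sigma,\Delta,W)$ has a finite set $Q$ of states, a finite set $Ch$ of channels containing a distinguished input channel $c_{in}$, a finite alphabet $\Sigma$ containing a letter $\$$, a transition relation $\Delta\subseteq Q\times Ch\times\Sigma_\lambda\times Ch\times\Sigma_\lambda\times Q$ such that (1) for all $q\in Q$, $(q,c_{in},\lambda,c_{in},\$,q)\in\Delta$; (2) for all $(q,c,a,c',a',q')\in\Delta$, $a=\lambda$ implies $a'=\$$ and $c=c'=c_{in}$; (3) for all $(q,c,a,c',a',q')\in\Delta$, $c\neq c_{in}$ implies $c'\neq c_{in}$; and a weight function $W:\Delta\times(\Sigma^* )^{Ch}\to\mathbb{Q}_{>0}$. A configuration is $(q,\nu)$ with $q\in Q$, $\nu:Ch\to\Sigma^*$. A transition $t=(q,c,a,c',a',q')$ is enabled in $(q,\nu)$ if $\nu(c)=aw$ for some $w$; its firing leads to $(q',\nu')$ where, if $c=c'$, $\nu'(c)=wa'$ and $\nu'$ agrees with $\nu$ elsewhere; if $c\neq c'$, $\nu'(c)=w$, $\nu'(c')=\nu(c')a'$ and $\nu'$ agrees with $\nu$ elsewhere. Reachability is via finite sequences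 of firings (weights are irrelevant for reachability). *)

theory Defs
  imports Complex_Main "HOL-Library.Nat_Bijection"
begin

datatype recf =
    Z
  | S
  | Id nat nat
  | Cn nat recf "recf list"
  | Pr nat recf recf
  | Mn nat recf

inductive eval :: "recf \<Rightarrow> nat list \<Rightarrow> nat \<Rightarrow> bool" where
  eval_Z:  "eval Z xs 0"
| eval_S:  "eval S [x] (Suc x)"
| eval_Id: "i < n \<Longrightarrow> length xs = n \<Longrightarrow> eval (Id n i) xs (xs ! i)"
| eval_Cn: "length xs = n \<Longrightarrow> length gs = length ys \<Longrightarrow>
            (\<forall>i < length gs. eval (gs ! i) xs (ys ! i)) \<Longrightarrow> eval f ys y \<Longrightarrow>
            eval (Cn n f gs) xs y"
| eval_Pr0: "length xs = n \<Longrightarrow> eval g xs y \<Longrightarrow> eval (Pr n g h) (0 # xs) y"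
| eval_PrS: "eval (Pr n g h) (k # xs) r \<Longrightarrow> eval h (k # r # xs) y \<Longrightarrow>
             eval (Pr n g h) (Suc k # xs) y"
| eval_Mn: "length xs = n \<Longrightarrow> eval f (z # xs) 0 \<Longrightarrow>
            (\<forall>y < z. \<exists>v. 0 < v \<and> eval f (y # xs) v) \<Longrightarrow> eval (Mn n f) xs z"

text \<open>States, channels and letters are natural numbers; the empty word \<lambda> in
  \<Sigma>_\<lambda> is represented by None, a letter a by Some a.  A transition
  (q, c, a, c', a', q') is a 6-tuple.\<close>

type_synonym trans = "nat \<times> nat \<times> nat option \<times> nat \<times> nat option \<times> nat"
type_synonym valuation = "nat \<Rightarrow> nat list"

definition is_pOCS ::
  "nat set \<Rightarrow> nat set \<Rightarrow> nat \<Rightarrow> nat set \<Rightarrow> nat \<Rightarrow> trans set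
   \<Rightarrow> (trans \<Rightarrow> valuation \<Rightarrow> rat) \<Rightarrow> bool" where
  "is_pOCS Q Ch cin Sig dol Delta W \<longleftrightarrow>
     finite Q \<and> finite Ch \<and> cin \<in> Ch \<and> finite Sig \<and> dol \<in> Sig \<and>
     Delta \<subseteq> Q \<times> Ch \<times> (insert None (Some ` Sig)) \<times> Ch \<times> (insert None (Some ` Sig)) \<times> Q \<and>
     (\<forall>q \<in> Q. (q, cin, None, cin, Some dol, q) \<in> Delta) \<and>
     (\<forall>(q, c, a, c', a', q') \<in> Delta. a = None \<longrightarrow> a' = Some dol \<and> c = cin \<and> c' = cin) \<and>
     (\<forall>(q, c, a, c', a', q') \<in> Delta. c \<noteq> cin \<longrightarrow> c' \<noteq> cin) \<and>
     (\<forall>t \<in> Delta. \<forall>\<nu>. (\<forall>c. set (\<nu> c) \<subseteq> Sig) \<longrightarrow> W t \<nu> > 0)"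

definition is_config :: "nat set \<Rightarrow> nat set \<Rightarrow> nat set \<Rightarrow> nat \<times> valuation \<Rightarrow> bool" where
  "is_config Q Ch Sig C \<longleftrightarrow>
     fst C \<in> Q \<and> (\<forall>c \<in> Ch. set (snd C c) \<subseteq> Sig) \<and> (\<forall>c. c \<notin> Ch \<longrightarrow> snd C c = [])"

fun opt_word :: "nat option \<Rightarrow> nat list" where
  "opt_word None = []"
| "opt_word (Some a) = [a]"

definition step :: "trans set \<Rightarrow> nat \<times> valuation \<Rightarrow> nat \<times> valuation \<Rightarrow> bool" where
  "step Delta C C' \<longleftrightarrow>
     (\<exists>c a c' a' w. (fst C, c, a, c', a', fst C') \<in> Delta \<and>
        snd C c = opt_word a @ w \<and>
        snd C' = (if c = c' then (snd C)(c := w @ opt_word a')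
                  else (snd C)(c := w, c' := snd C c' @ opt_word a')))"

definition reachable :: "trans set \<Rightarrow> nat \<times> valuation \<Rightarrow> nat \<times> valuation \<Rightarrow> bool" where
  "reachable Delta C C' \<longleftrightarrow> (step Delta)\<^sup>*\<^sup>* C C'"

definition enc_set :: "nat set \<Rightarrow> nat" where
  "enc_set A = list_encode (sorted_list_of_set A)"

fun enc_opt :: "nat option \<Rightarrow> nat" where
  "enc_opt None = 0"
| "enc_opt (Some a) = Suc a"

fun enc_trans :: "trans \<Rightarrow> nat" where
  "enc_trans (q, c, a, c', a', q') = list_encode [q, c, enc_opt a, c', enc_opt a', q']"

definition enc_delta :: "trans set \<Rightarrow> nat" where
  "enc_delta Delta = enc_set (enc_trans ` Delta)"

definition enc_val :: "nat set \<Rightarrow> valuation \<Rightarrow> nat" where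
  "enc_val Ch \<nu> = list_encode (map (\<lambda>c. list_encode (\<nu> c)) (sorted_list_of_set Ch))"

definition enc_instance ::
  "nat set \<Rightarrow> nat set \<Rightarrow> nat \<Rightarrow> nat set \<Rightarrow> nat \<Rightarrow> trans set
   \<Rightarrow> nat \<times> valuation \<Rightarrow> nat \<times> valuation \<Rightarrow> nat" where
  "enc_instance Q Ch cin Sig dol Delta C0 Cf =
     list_encode [enc_set Q, enc_set Ch, cin, enc_set Sig, dol, enc_delta Delta,
                  fst C0, enc_val Ch (snd C0), fst Cf, enc_val Ch (snd Cf)]"

definition decides_pOCS_reach :: "recf \<Rightarrow> bool" where
  "decides_pOCS_reach f \<longleftrightarrow>
     (\<forall>Q Ch cin Sig dol Delta W C0 Cf.
        is_pOCS Q Ch cin Sig dol Delta W \<longrightarrow> is_config Q Ch Sig C0 \<longrightarrow> is_config Q Ch Sig Cf \<longrightarrow>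
        eval f [enc_instance Q Ch cin Sig dol Delta C0 Cf]
             (if reachable Delta C0 Cf then 1 else 0))"

end

(*
  Partial recursive functions are compiled into loop programs over registers (increment, and a
  while loop that decrements a nonzero register), and a loop program is simulated by a channel
  system: register r is the unary word 0^n 1 in channel r + 2, reading a letter and writing it
  back rotates a channel, and the only transition that lengthens a word consumes a $ from the
  input channel. Apart from the timing of the transitions that put $ into the input channel, this
  system is deterministic, so a configuration is reachable iff the run of the program passes
  through it.

  Given a decider f, let P be the program that computes f on the code of "the instance of P
  started with m in register 0" from m, and then tests its answer: it accepts iff the answer is 0.
  The instance depends on m only through register 0, so a fixed number m0 encodes all of its other
  data, and on input m0 the program P asks f about its own run. Its final configuration is then
  reachable iff f says it is not.
*)

theory Submission
  imports Defs
begin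

section \<open>Recursive functions on codes of pairs and lists\<close>

lemma eval_Id_eq: "i < n \<Longrightarrow> length xs = n \<Longrightarrow> v = xs ! i \<Longrightarrow> eval (Id n i) xs v"
  using eval_Id by blast

lemma eval_Cn1: "eval g xs u \<Longrightarrow> eval f [u] y \<Longrightarrow> length xs = n \<Longrightarrow> eval (Cn n f [g]) xs y"
  by (rule eval_Cn[where ys = "[u]"]) auto

lemma eval_Cn2: "eval g1 xs u1 \<Longrightarrow> eval g2 xs u2 \<Longrightarrow> eval f [u1, u2] y \<Longrightarrow> length xs = n
  \<Longrightarrow> eval (Cn n f [g1, g2]) xs y"
  by (rule eval_Cn[where ys = "[u1, u2]"]) (auto simp: less_Suc_eq)

fun rec_const :: "nat \<Rightarrow> nat \<Rightarrow> recf" where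
  "rec_const k 0 = Z"
| "rec_const k (Suc n) = Cn k S [rec_const k n]"

lemma eval_rec_const: "length xs = k \<Longrightarrow> eval (rec_const k n) xs n"
  by (induction n) (auto intro: eval_Z eval_S eval_Cn1)

definition rec_add :: recf where
  "rec_add = Pr 1 (Id 1 0) (Cn 3 S [Id 3 1])"

lemma eval_rec_add: "eval rec_add [k, x] (k + x)"
proof (induction k)
  case 0
  then show ?case unfolding rec_add_def by (auto intro!: eval_Pr0 eval_Id_eq)
next
  case (Suc k)
  have "eval (Cn 3 S [Id 3 1]) [k, k + x, x] (Suc (k + x))"
    by (rule eval_Cn1) (auto intro: eval_S eval_Id_eq)
  with Suc show ?case unfolding rec_add_def by (auto intro: eval_PrS)
qed

lemma eval_rec_add_eq: "v = k + x \<Longrightarrow> eval rec_add [k, x] v"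
  using eval_rec_add by simp

definition rec_triangle :: recf where
  "rec_triangle = Pr 0 Z (Cn 2 rec_add [Cn 2 S [Id 2 0], Id 2 1])"

lemma eval_rec_triangle: "eval rec_triangle [k] (triangle k)"
proof (induction k)
  case 0
  then show ?case unfolding rec_triangle_def by (auto intro!: eval_Pr0 eval_Z)
next
  case (Suc k)
  have "eval (Cn 2 rec_add [Cn 2 S [Id 2 0], Id 2 1]) [k, triangle k] (triangle (Suc k))"
    by (rule eval_Cn2) (auto intro!: eval_Cn1 eval_S eval_Id_eq eval_rec_add_eq)
  with Suc show ?case unfolding rec_triangle_def by (auto intro: eval_PrS)
qed

definition rec_prod_encode :: recf where
  "rec_prod_encode = Cn 2 rec_add [Id 2 0, Cn 2 rec_triangle [Cn 2 rec_add [Id 2 0, Id 2 1]]]"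

lemma eval_rec_prod_encode: "eval rec_prod_encode [x, y] (prod_encode (x, y))"
  unfolding rec_prod_encode_def prod_encode_def
  by (rule eval_Cn2) (auto intro!: eval_Cn1 eval_Cn2 eval_Id_eq eval_rec_add_eq eval_rec_triangle)

definition rec_pred :: recf where
  "rec_pred = Pr 0 Z (Id 2 0)"

lemma eval_rec_pred: "eval rec_pred [k] (k - 1)"
proof (induction k)
  case 0
  then show ?case unfolding rec_pred_def by (auto intro!: eval_Pr0 eval_Z)
next
  case (Suc k)
  then show ?case unfolding rec_pred_def by (intro eval_PrS[where r = "k - 1"]) (auto intro: eval_Id_eq)
qed

definition rec_diff :: recf where
  "rec_diff = Pr 1 (Id 1 0) (Cn 3 rec_pred [Id 3 1])"

lemma eval_rec_diff: "eval rec_diff [k, x] (x - k)"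
proof (induction k)
  case 0
  then show ?case unfolding rec_diff_def by (auto intro!: eval_Pr0 eval_Id_eq)
next
  case (Suc k)
  have "eval (Cn 3 rec_pred [Id 3 1]) [k, x - k, x] (x - Suc k)"
    using eval_rec_pred[of "x - k"] by (intro eval_Cn1) (auto intro: eval_Id_eq)
  with Suc show ?case unfolding rec_diff_def by (auto intro: eval_PrS)
qed

lemma eval_rec_diff_eq: "v = x - k \<Longrightarrow> eval rec_diff [k, x] v"
  using eval_rec_diff by simp

lemma triangle_mono: "m \<le> n \<Longrightarrow> triangle m \<le> triangle n"
  unfolding triangle_def by (intro div_le_mono mult_le_mono) auto

definition rec_triangle_gap :: recf where
  "rec_triangle_gap = Cn 2 rec_diff [Cn 2 rec_triangle [Cn 2 S [Id 2 0]], Cn 2 S [Id 2 1]]"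

lemma eval_rec_triangle_gap: "eval rec_triangle_gap [k, z] (Suc z - triangle (Suc k))"
  unfolding rec_triangle_gap_def
  by (rule eval_Cn2) (auto intro!: eval_Cn1 eval_S eval_Id_eq eval_rec_diff_eq eval_rec_triangle)

text \<open>The least \<open>k\<close> with \<open>z < triangle (k + 1)\<close>; on \<open>z = prod_encode (x, y)\<close> this is \<open>x + y\<close>.\<close>
definition rec_triangle_root :: recf where
  "rec_triangle_root = Mn 1 rec_triangle_gap"

lemma eval_rec_triangle_root: "eval rec_triangle_root [prod_encode (x, y)] (x + y)"
  unfolding rec_triangle_root_def
proof (rule eval_Mn)
  show "eval rec_triangle_gap [x + y, prod_encode (x, y)] 0"
    using eval_rec_triangle_gap[of "x + y" "prod_encode (x, y)"] by (simp add: prod_encode_def)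
  show "\<forall>k<x + y. \<exists>v>0. eval rec_triangle_gap [k, prod_encode (x, y)] v"
  proof (intro allI impI)
    fix k assume "k < x + y"
    then have "0 < Suc (prod_encode (x, y)) - triangle (Suc k)"
      using triangle_mono[of "Suc k" "x + y"] by (simp add: prod_encode_def)
    then show "\<exists>v>0. eval rec_triangle_gap [k, prod_encode (x, y)] v"
      using eval_rec_triangle_gap by blast
  qed
qed simp

definition rec_fst :: recf where
  "rec_fst = Cn 1 rec_diff [Cn 1 rec_triangle [rec_triangle_root], Id 1 0]"

definition rec_snd :: recf where
  "rec_snd = Cn 1 rec_diff [rec_fst, rec_triangle_root]"

lemma eval_rec_fst: "eval rec_fst [prod_encode (x, y)] x"
  unfolding rec_fst_def
  by (rule eval_Cn2[where ?u1.0 = "triangle (x + y)"])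
     (auto intro!: eval_Cn1 eval_rec_triangle eval_rec_triangle_root eval_Id_eq eval_rec_diff_eq,
      simp add: prod_encode_def)

lemma eval_rec_snd: "eval rec_snd [prod_encode (x, y)] y"
  unfolding rec_snd_def
  by (rule eval_Cn2) (auto intro!: eval_rec_fst eval_rec_triangle_root eval_rec_diff_eq)

definition rec_Cons :: recf where
  "rec_Cons = Cn 2 S [rec_prod_encode]"

lemma eval_rec_Cons: "eval rec_Cons [x, list_encode xs] (list_encode (x # xs))"
  unfolding rec_Cons_def by (auto intro!: eval_Cn1 eval_rec_prod_encode eval_S)

definition rec_prepend :: "recf list \<Rightarrow> recf \<Rightarrow> recf" where
  "rec_prepend us t = foldr (\<lambda>u v. Cn 1 rec_Cons [u, v]) us t"

lemma eval_rec_prepend: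
  assumes "list_all2 (\<lambda>u x. eval u [m] x) us xs" and "eval t [m] (list_encode ys)"
  shows "eval (rec_prepend us t) [m] (list_encode (xs @ ys))"
  using assms(1)
proof (induction rule: list_all2_induct)
  case Nil
  then show ?case using assms(2) by (simp add: rec_prepend_def)
next
  case (Cons u us x xs)
  then show ?case
    unfolding rec_prepend_def by (auto intro!: eval_Cn2 eval_rec_Cons simp del: list_encode.simps)
qed

definition rec_hd :: recf where
  "rec_hd = Cn 1 rec_fst [rec_pred]"

definition rec_tl :: recf where
  "rec_tl = Cn 1 rec_snd [rec_pred]"

lemma eval_rec_hd: "eval rec_hd [list_encode (x # xs)] x"
  unfolding rec_hd_def using eval_rec_pred[of "list_encode (x # xs)"]
  by (auto intro!: eval_Cn1 eval_rec_fst)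

lemma eval_rec_tl: "eval rec_tl [list_encode (x # xs)] (list_encode xs)"
  unfolding rec_tl_def using eval_rec_pred[of "list_encode (x # xs)"]
  by (auto intro!: eval_Cn1 eval_rec_snd)

fun rec_drop :: "nat \<Rightarrow> recf" where
  "rec_drop 0 = Id 1 0"
| "rec_drop (Suc j) = Cn 1 rec_tl [rec_drop j]"

lemma eval_rec_drop: "j \<le> length xs \<Longrightarrow> eval (rec_drop j) [list_encode xs] (list_encode (drop j xs))"
proof (induction j)
  case 0
  then show ?case by (auto intro: eval_Id_eq)
next
  case (Suc j)
  then have "drop j xs = xs ! j # drop (Suc j) xs"
    by (simp add: Cons_nth_drop_Suc)
  with Suc show ?case by (auto intro!: eval_Cn1 eval_rec_tl simp del: list_encode.simps)
qed

definition rec_nth :: "nat \<Rightarrow> recf" where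
  "rec_nth j = Cn 1 rec_hd [rec_drop j]"

lemma eval_rec_nth: "j < length xs \<Longrightarrow> eval (rec_nth j) [list_encode xs] (xs ! j)"
  unfolding rec_nth_def using eval_rec_drop[of j xs] eval_rec_hd[of "xs ! j" "drop (Suc j) xs"]
  by (intro eval_Cn1) (auto simp: Cons_nth_drop_Suc simp del: list_encode.simps)

definition rec_unary :: recf where
  "rec_unary = Pr 0 (rec_const 0 (list_encode [1])) (Cn 2 rec_Cons [Z, Id 2 1])"

lemma eval_rec_unary: "eval rec_unary [n] (list_encode (replicate n 0 @ [1]))"
proof (induction n)
  case 0
  then show ?case
    unfolding rec_unary_def by (auto intro!: eval_Pr0 eval_rec_const simp del: list_encode.simps)
next
  case (Suc n)
  have "eval (Cn 2 rec_Cons [Z, Id 2 1]) [n, list_encode (replicate n 0 @ [1])]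
      (list_encode (0 # replicate n 0 @ [1]))"
    by (rule eval_Cn2) (auto intro: eval_Z eval_Id_eq eval_rec_Cons simp del: list_encode.simps)
  with Suc show ?case unfolding rec_unary_def by (auto intro: eval_PrS)
qed

section \<open>Loop programs\<close>

datatype prog = Skip | Inc nat | Seq prog prog | Loop nat prog

text \<open>Since \<open>P\<close> may change \<open>r\<close>, \<open>Loop r P\<close> is a while loop, not a bounded iteration.\<close>
inductive big_step :: "prog \<Rightarrow> (nat \<Rightarrow> nat) \<Rightarrow> (nat \<Rightarrow> nat) \<Rightarrow> bool" where
  Skip: "big_step Skip s s"
| Inc: "big_step (Inc r) s (s(r := Suc (s r)))"
| Seq: "big_step P s s' \<Longrightarrow> big_step Q s' s'' \<Longrightarrow> big_step (Seq P Q) s s''"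
| Loop_zero: "s r = 0 \<Longrightarrow> big_step (Loop r P) s s"
| Loop_Suc: "s r = Suc k \<Longrightarrow> big_step P (s(r := k)) s' \<Longrightarrow> big_step (Loop r P) s' s''
    \<Longrightarrow> big_step (Loop r P) s s''"

lemma big_step_eq: "big_step P s t \<Longrightarrow> t = t' \<Longrightarrow> big_step P s t'"
  by simp

lemma big_step_Loop_trace:
  assumes body: "\<And>i. i < k \<Longrightarrow> \<sigma> i r \<noteq> 0 \<and> big_step P ((\<sigma> i)(r := \<sigma> i r - 1)) (\<sigma> (Suc i))"
    and exit: "\<sigma> k r = 0"
  shows "big_step (Loop r P) (\<sigma> 0) (\<sigma> k)"
proof -
  have "big_step (Loop r P) (\<sigma> (k - n)) (\<sigma> k)" if "n \<le> k" for n
    using that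
  proof (induction n)
    case 0
    then show ?case using exit by (simp add: Loop_zero)
  next
    case (Suc n)
    then have i: "k - Suc n < k" and next_i: "Suc (k - Suc n) = k - n"
      by auto
    from body[OF i] obtain m where "\<sigma> (k - Suc n) r = Suc m"
      using not0_implies_Suc by blast
    with body[OF i] Suc show ?case
      by (auto simp: next_i intro: Loop_Suc)
  qed
  from this[of k] show ?thesis
    by simp
qed

definition clear :: "nat \<Rightarrow> prog" where
  "clear r = Loop r Skip"

definition move :: "nat \<Rightarrow> nat \<Rightarrow> prog" where
  "move r d = Loop r (Inc d)"

text \<open>Register \<open>t\<close> is scratch space for restoring \<open>r\<close>.\<close>
definition copy :: "nat \<Rightarrow> nat \<Rightarrow> nat \<Rightarrow> prog" where
  "copy r d t = Seq (Loop r (Seq (Inc d) (Inc t))) (move t r)"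

lemma big_step_clear: "big_step (clear r) s (s(r := 0))"
proof -
  have "big_step (Loop r Skip) ((\<lambda>i. s(r := s r - i)) 0) ((\<lambda>i. s(r := s r - i)) (s r))"
    by (rule big_step_Loop_trace) (auto intro!: big_step_eq[OF Skip] simp: fun_eq_iff)
  then show ?thesis
    by (simp add: clear_def)
qed

lemma big_step_move:
  assumes "r \<noteq> d"
  shows "big_step (move r d) s (s(r := 0, d := s d + s r))"
proof -
  have "big_step (Loop r (Inc d)) ((\<lambda>i. s(r := s r - i, d := s d + i)) 0)
      ((\<lambda>i. s(r := s r - i, d := s d + i)) (s r))"
    using assms by (intro big_step_Loop_trace) (auto intro!: big_step_eq[OF Inc] simp: fun_eq_iff)
  then show ?thesis
    by (simp add: move_def)
qed

lemma big_step_copy: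
  assumes "r \<noteq> d" "r \<noteq> t" "d \<noteq> t" "s t = 0"
  shows "big_step (copy r d t) s (s(d := s d + s r))"
proof -
  have "big_step (Loop r (Seq (Inc d) (Inc t))) ((\<lambda>i. s(r := s r - i, d := s d + i, t := i)) 0)
      ((\<lambda>i. s(r := s r - i, d := s d + i, t := i)) (s r))"
    using assms by (intro big_step_Loop_trace)
      (auto intro!: Seq[OF Inc] big_step_eq[OF Inc] simp: fun_eq_iff)
  then have "big_step (Loop r (Seq (Inc d) (Inc t))) s (s(r := 0, d := s d + s r, t := s r))"
    using assms by (simp add: fun_upd_idem)
  then show ?thesis
    unfolding copy_def using assms by (auto intro!: Seq big_step_eq[OF big_step_move] simp: fun_eq_iff)
qed

fun copy_block :: "nat \<Rightarrow> nat \<Rightarrow> nat \<Rightarrow> nat \<Rightarrow> prog" where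
  "copy_block src dst 0 t = Skip"
| "copy_block src dst (Suc a) t = Seq (copy_block src dst a t) (copy (src + a) (dst + a) t)"

fun clear_block :: "nat \<Rightarrow> nat \<Rightarrow> prog" where
  "clear_block d 0 = Skip"
| "clear_block d (Suc a) = Seq (clear_block d a) (clear (d + a))"

lemma big_step_copy_block:
  assumes "src + a \<le> dst \<or> dst + a \<le> src" "t \<notin> {src..<src + a}" "t \<notin> {dst..<dst + a}"
    and "s t = 0" "\<forall>j<a. s (dst + j) = 0"
  shows "big_step (copy_block src dst a t) s
    (\<lambda>r. if dst \<le> r \<and> r < dst + a then s (src + (r - dst)) else s r)"
  using assms
proof (induction a)
  case 0
  then show ?case by (auto intro!: big_step_eq[OF Skip])
next
  case (Suc a)
  then have "big_step (copy_block src dst a t) s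
      (\<lambda>r. if dst \<le> r \<and> r < dst + a then s (src + (r - dst)) else s r)"
    by auto
  with Suc.prems show ?case
    by (auto intro!: Seq big_step_eq[OF big_step_copy] simp: fun_eq_iff)
qed

lemma big_step_clear_block: "big_step (clear_block d a) s (\<lambda>r. if d \<le> r \<and> r < d + a then 0 else s r)"
proof (induction a)
  case 0
  then show ?case by (auto intro!: big_step_eq[OF Skip])
next
  case (Suc a)
  then show ?case by (auto intro!: Seq big_step_eq[OF big_step_clear] simp: fun_eq_iff)
qed

section \<open>Compiling recursive functions to loop programs\<close>

definition args_at :: "nat list \<Rightarrow> nat \<Rightarrow> (nat \<Rightarrow> nat) \<Rightarrow> bool" where
  "args_at xs b s \<longleftrightarrow> (\<forall>j<length xs. s (b + j) = xs ! j) \<and> (\<forall>r\<ge>b + length xs. s r = 0)"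

definition computes :: "prog \<Rightarrow> nat \<Rightarrow> nat list \<Rightarrow> nat \<Rightarrow> bool" where
  "computes P b xs y \<longleftrightarrow> (\<forall>s. args_at xs b s \<longrightarrow> big_step P s (s(b + length xs := y)))"

text \<open>Run \<open>P\<close> on a copy at \<open>d\<close> of the \<open>a\<close> arguments at \<open>b\<close> and store its result in register \<open>e\<close>.\<close>
definition call :: "prog \<Rightarrow> nat \<Rightarrow> nat \<Rightarrow> nat \<Rightarrow> nat \<Rightarrow> prog" where
  "call P a b d e = Seq (copy_block b d a (d + a)) (Seq P (Seq (move (d + a) e) (clear_block d a)))"

lemma big_step_call:
  assumes P: "computes P d xs y" and a: "length xs = a" and xs: "\<forall>j<a. s (b + j) = xs ! j"
    and zero: "\<forall>r\<ge>d. s r = 0" and "b + a \<le> d" "e < d" "s e = 0"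
  shows "big_step (call P a b d e) s (s(e := y))"
proof -
  define t where "t = (\<lambda>r. if d \<le> r \<and> r < d + a then s (b + (r - d)) else s r)"
  have 1: "big_step (copy_block b d a (d + a)) s t"
    unfolding t_def using assms by (intro big_step_copy_block) auto
  have "args_at xs d t"
    unfolding args_at_def t_def using assms by auto
  then have 2: "big_step P t (t(d + a := y))"
    using P a unfolding computes_def by blast
  have 3: "big_step (move (d + a) e) (t(d + a := y)) (t(d + a := 0, e := y))"
    using assms by (intro big_step_eq[OF big_step_move]) (auto simp: t_def)
  have 4: "big_step (clear_block d a) (t(d + a := 0, e := y)) (s(e := y))"
    using assms by (intro big_step_eq[OF big_step_clear_block]) (auto simp: t_def fun_eq_iff)
  show ?thesis
    unfolding call_def by (intro Seq[OF 1] Seq[OF 2] Seq[OF 3] 4)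
qed

fun calls :: "prog list \<Rightarrow> nat \<Rightarrow> nat \<Rightarrow> nat \<Rightarrow> nat \<Rightarrow> prog" where
  "calls [] a b d e = Skip"
| "calls (P # Ps) a b d e = Seq (call P a b d e) (calls Ps a b d (Suc e))"

lemma big_step_calls:
  assumes "list_all2 (\<lambda>P y. computes P d xs y) Ps ys" and "length xs = a"
    and "\<forall>j<a. s (b + j) = xs ! j" "\<forall>r\<ge>d. s r = 0" "b + a \<le> e" "e + length Ps \<le> d"
    and "\<forall>i<length Ps. s (e + i) = 0"
  shows "big_step (calls Ps a b d e) s (\<lambda>r. if e \<le> r \<and> r < e + length ys then ys ! (r - e) else s r)"
  using assms
proof (induction arbitrary: e s rule: list_all2_induct)
  case Nil
  then show ?case by (auto intro!: big_step_eq[OF Skip])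
next
  case (Cons P Ps y ys)
  then have "big_step (call P a b d e) s (s(e := y))"
    by (intro big_step_call) auto
  moreover have "big_step (calls Ps a b d (Suc e)) (s(e := y))
      (\<lambda>r. if Suc e \<le> r \<and> r < Suc e + length ys then ys ! (r - Suc e) else (s(e := y)) r)"
    using Cons by (intro Cons.IH) auto
  moreover have "(\<lambda>r. if Suc e \<le> r \<and> r < Suc e + length ys then ys ! (r - Suc e) else (s(e := y)) r)
      = (\<lambda>r. if e \<le> r \<and> r < e + length (y # ys) then (y # ys) ! (r - e) else s r)"
    by (auto simp: fun_eq_iff nth_Cons')
  ultimately show ?case
    by (auto intro: Seq)
qed

text \<open>\<open>compile f a b\<close> reads the \<open>a\<close> arguments from the registers \<open>b ..< b + a\<close> and writes the result
  to \<open>b + a\<close>; all higher registers serve as scratch space and are restored to \<open>0\<close>.  For \<open>Pr\<close>,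
  register \<open>b + a + 1\<close> counts down the iterations and the arguments \<open>i # r # xs\<close> of the step
  function are kept from \<open>b + a + 2\<close> on; for \<open>Mn\<close>, the candidate \<open>j\<close> is kept right before \<open>xs\<close>.\<close>
fun compile :: "recf \<Rightarrow> nat \<Rightarrow> nat \<Rightarrow> prog" where
  "compile Z a b = Skip"
| "compile S a b = Seq (copy b (b + 1) (b + 2)) (Inc (b + 1))"
| "compile (Id n i) a b = copy (b + i) (b + a) (b + a + 1)"
| "compile (Cn n f gs) a b =
     (let c = b + a + 1; m = length gs; d = c + m + 1 in
      Seq (calls (map (\<lambda>g. compile g a d) gs) a b d c)
      (Seq (compile f m c) (Seq (move (c + m) (b + a)) (clear_block c m))))"
| "compile (Pr n g h) a b =
     (let k = b + a + 1; c = b + a + 2; out = c + a + 1 in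
      Seq (call (compile g (a - 1) (c + 2)) (a - 1) (b + 1) (c + 2) (c + 1))
      (Seq (copy_block (b + 1) (c + 2) (a - 1) out)
      (Seq (copy b k out)
      (Seq (Loop k (Seq (compile h (a + 1) c) (Seq (clear (c + 1)) (Seq (move out (c + 1)) (Inc c)))))
      (Seq (move (c + 1) (b + a)) (clear_block c (a + 1)))))))"
| "compile (Mn n f) a b =
     (let c = b + a + 1; out = c + a + 1 in
      Seq (copy_block b (c + 1) a out)
      (Seq (compile f (a + 1) c)
      (Seq (Loop out (Seq (clear out) (Seq (Inc c) (compile f (a + 1) c))))
      (Seq (move c (b + a)) (clear_block (c + 1) a)))))"

definition compile_correct :: "recf \<Rightarrow> bool" where
  "compile_correct f \<longleftrightarrow> (\<forall>xs y b. eval f xs y \<longrightarrow> computes (compile f (length xs) b) b xs y)"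

lemma compile_correctD:
  "compile_correct f \<Longrightarrow> eval f xs y \<Longrightarrow> length xs = a \<Longrightarrow> computes (compile f a b) b xs y"
  unfolding compile_correct_def by blast

inductive_cases eval_ZE: "eval Z xs y"
inductive_cases eval_SE: "eval S xs y"
inductive_cases eval_IdE: "eval (Id n i) xs y"
inductive_cases eval_CnE: "eval (Cn n f gs) xs y"
inductive_cases eval_Pr0E: "eval (Pr n g h) (0 # xs) y"
inductive_cases eval_PrSE: "eval (Pr n g h) (Suc k # xs) y"
inductive_cases eval_PrE: "eval (Pr n g h) xs y"
inductive_cases eval_MnE: "eval (Mn n f) xs y"

lemma compile_correct_Z: "compile_correct Z"
  unfolding compile_correct_def computes_def args_at_def
  by (auto elim!: eval_ZE intro!: big_step_eq[OF Skip])

lemma compile_correct_S: "compile_correct S"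
  unfolding compile_correct_def computes_def args_at_def
  by (auto elim!: eval_SE intro!: Seq[OF big_step_copy] big_step_eq[OF Inc] simp: fun_eq_iff)

lemma compile_correct_Id: "compile_correct (Id n i)"
  unfolding compile_correct_def computes_def args_at_def
  by (auto elim!: eval_IdE intro!: big_step_eq[OF big_step_copy] simp: fun_eq_iff)

lemma compile_correct_Cn:
  assumes f: "compile_correct f" and gs: "\<forall>g\<in>set gs. compile_correct g"
  shows "compile_correct (Cn n f gs)"
  unfolding compile_correct_def computes_def
proof (intro allI impI)
  fix xs y b s
  assume "eval (Cn n f gs) xs y" and args: "args_at xs b s"
  then obtain ys where ys: "length gs = length ys" "\<forall>i<length gs. eval (gs ! i) xs (ys ! i)"
    and f_ys: "eval f ys y"
    by (auto elim: eval_CnE)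
  define a c m d where "a = length xs" and "c = b + a + 1" and "m = length gs" and "d = c + m + 1"
  define t where "t = (\<lambda>r. if c \<le> r \<and> r < c + m then ys ! (r - c) else s r)"
  have "list_all2 (\<lambda>P y. computes P d xs y) (map (\<lambda>g. compile g a d) gs) ys"
    using ys gs unfolding compile_correct_def a_def by (auto simp: list_all2_conv_all_nth)
  then have 1: "big_step (calls (map (\<lambda>g. compile g a d) gs) a b d c) s t"
    unfolding t_def using args ys(1)
    by (intro big_step_eq[OF big_step_calls]) (auto simp: args_at_def a_def c_def d_def m_def)
  have "args_at ys c t"
    using args ys(1) by (auto simp: args_at_def t_def a_def c_def m_def)
  then have 2: "big_step (compile f m c) t (t(c + m := y))"
    using compile_correctD[OF f f_ys] ys(1) unfolding computes_def m_def by simp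
  have 3: "big_step (move (c + m) (b + a)) (t(c + m := y)) (t(c + m := 0, b + a := y))"
    using args by (intro big_step_eq[OF big_step_move]) (auto simp: t_def args_at_def a_def c_def)
  have 4: "big_step (clear_block c m) (t(c + m := 0, b + a := y)) (s(b + a := y))"
    using args by (intro big_step_eq[OF big_step_clear_block])
      (auto simp: t_def args_at_def a_def c_def fun_eq_iff)
  show "big_step (compile (Cn n f gs) (length xs) b) s (s(b + length xs := y))"
    using Seq[OF 1 Seq[OF 2 Seq[OF 3 4]]] by (simp add: a_def c_def d_def m_def Let_def)
qed

lemma eval_Pr_trace:
  "eval (Pr n g h) (k # xs) y \<Longrightarrow>
    \<exists>v. eval g xs (v 0) \<and> (\<forall>i<k. eval h (i # v i # xs) (v (Suc i))) \<and> v k = y"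
proof (induction k arbitrary: y)
  case 0
  then show ?case by (auto elim: eval_Pr0E)
next
  case (Suc k)
  then obtain r where "eval (Pr n g h) (k # xs) r" and step: "eval h (k # r # xs) y"
    by (auto elim: eval_PrSE)
  with Suc.IH obtain v where "eval g xs (v 0)" "\<forall>i<k. eval h (i # v i # xs) (v (Suc i))" "v k = r"
    by blast
  with step show ?case
    by (intro exI[of _ "v(Suc k := y)"]) (auto simp: less_Suc_eq)
qed

lemma big_step_Pr_round:
  assumes P: "computes P c (i # r # xs) y" and args: "args_at (i # r # xs) c s"
  shows "big_step (Seq P (Seq (clear (c + 1)) (Seq (move (c + length xs + 2) (c + 1)) (Inc c))))
    s (s(c := Suc i, c + 1 := y))"
proof -
  let ?out = "c + length xs + 2"
  have 1: "big_step P s (s(?out := y))"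
    using P args unfolding computes_def by (simp add: add.assoc)
  have 2: "big_step (clear (c + 1)) (s(?out := y)) (s(?out := y, c + 1 := 0))"
    by (rule big_step_clear)
  have 3: "big_step (move ?out (c + 1)) (s(?out := y, c + 1 := 0)) (s(?out := 0, c + 1 := y))"
    by (rule big_step_eq[OF big_step_move]) (auto simp: fun_eq_iff)
  have 4: "big_step (Inc c) (s(?out := 0, c + 1 := y)) (s(c := Suc i, c + 1 := y))"
    using args by (intro big_step_eq[OF Inc]) (auto simp: args_at_def fun_eq_iff)
  show ?thesis
    by (intro Seq[OF 1] Seq[OF 2] Seq[OF 3] 4)
qed

lemma big_step_Pr_loop:
  assumes P: "\<forall>i<k. computes P c (i # v i # xs) (v (Suc i))"
    and args: "args_at (0 # v 0 # xs) c s" and cnt: "cnt < c" "s cnt = k"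
  shows "big_step (Loop cnt (Seq P (Seq (clear (c + 1))
      (Seq (move (c + length xs + 2) (c + 1)) (Inc c))))) s (s(cnt := 0, c := k, c + 1 := v k))"
proof -
  define \<sigma> where "\<sigma> i = s(cnt := k - i, c := i, c + 1 := v i)" for i
  have "big_step (Loop cnt (Seq P (Seq (clear (c + 1))
      (Seq (move (c + length xs + 2) (c + 1)) (Inc c))))) (\<sigma> 0) (\<sigma> k)"
  proof (rule big_step_Loop_trace)
    fix i assume i: "i < k"
    let ?s = "(\<sigma> i)(cnt := k - i - 1)"
    have "args_at (i # v i # xs) c ?s"
      using args cnt by (auto simp: args_at_def \<sigma>_def nth_Cons' numeral_2_eq_2)
    then have "big_step (Seq P (Seq (clear (c + 1)) (Seq (move (c + length xs + 2) (c + 1)) (Inc c))))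
        ?s (?s(c := Suc i, c + 1 := v (Suc i)))"
      using P i by (intro big_step_Pr_round) auto
    moreover have "?s(c := Suc i, c + 1 := v (Suc i)) = \<sigma> (Suc i)"
      using cnt by (auto simp: \<sigma>_def fun_eq_iff)
    ultimately show "\<sigma> i cnt \<noteq> 0 \<and> big_step (Seq P (Seq (clear (c + 1))
        (Seq (move (c + length xs + 2) (c + 1)) (Inc c)))) ((\<sigma> i)(cnt := \<sigma> i cnt - 1)) (\<sigma> (Suc i))"
      using i cnt by (auto simp: \<sigma>_def)
  qed (use cnt in \<open>simp add: \<sigma>_def\<close>)
  moreover have "\<sigma> 0 = s"
    using args cnt by (auto simp: \<sigma>_def args_at_def fun_eq_iff)
  ultimately show ?thesis
    by (simp add: \<sigma>_def)
qed

lemma compile_correct_Pr: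
  assumes g: "compile_correct g" and h: "compile_correct h"
  shows "compile_correct (Pr n g h)"
  unfolding compile_correct_def computes_def
proof (intro allI impI)
  fix xs' y b s
  assume eval: "eval (Pr n g h) xs' y" and args: "args_at xs' b s"
  then obtain k xs where xs': "xs' = k # xs"
    by (auto elim: eval_PrE)
  with eval obtain v where v0: "eval g xs (v 0)" and vS: "\<forall>i<k. eval h (i # v i # xs) (v (Suc i))"
    and vk: "v k = y"
    using eval_Pr_trace by blast
  define a cnt c out where "a = length xs'" and "cnt = b + a + 1" and "c = b + a + 2"
    and "out = c + a + 1"
  define t where "t = (\<lambda>q. if c + 2 \<le> q \<and> q < out then xs ! (q - (c + 2)) else s q)"
  have a: "a = Suc (length xs)" and s_xs: "\<forall>j<length xs. s (b + 1 + j) = xs ! j"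
    and s_k: "s b = k" and zero: "\<forall>q\<ge>b + a. s q = 0"
    using args unfolding args_at_def xs' a_def by auto
  have 1: "big_step (call (compile g (a - 1) (c + 2)) (a - 1) (b + 1) (c + 2) (c + 1))
      s (s(c + 1 := v 0))"
    using g v0 s_xs zero unfolding compile_correct_def
    by (intro big_step_call) (auto simp: a c_def)
  have "t q = (if c + 2 \<le> q \<and> q < c + 2 + (a - 1) then s (b + 1 + (q - (c + 2))) else s q)" for q
    using s_xs[rule_format, of "q - (c + 2)"] by (auto simp: t_def a out_def)
  then have 2: "big_step (copy_block (b + 1) (c + 2) (a - 1) out) (s(c + 1 := v 0)) (t(c + 1 := v 0))"
    using zero by (intro big_step_eq[OF big_step_copy_block]) (auto simp: a c_def out_def fun_eq_iff)
  have 3: "big_step (copy b cnt out) (t(c + 1 := v 0)) (t(c + 1 := v 0, cnt := k))"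
    using s_k zero by (intro big_step_eq[OF big_step_copy]) (auto simp: t_def a cnt_def c_def out_def)
  have "\<forall>i<k. computes (compile h (a + 1) c) c (i # v i # xs) (v (Suc i))"
    using vS by (auto intro!: compile_correctD[OF h] simp: a)
  moreover have "args_at (0 # v 0 # xs) c (t(c + 1 := v 0, cnt := k))"
    using zero by (auto simp: args_at_def t_def a cnt_def c_def out_def nth_Cons' numeral_2_eq_2)
  ultimately have "big_step (Loop cnt (Seq (compile h (a + 1) c) (Seq (clear (c + 1))
      (Seq (move (c + length xs + 2) (c + 1)) (Inc c))))) (t(c + 1 := v 0, cnt := k))
      ((t(c + 1 := v 0, cnt := k))(cnt := 0, c := k, c + 1 := v k))"
    by (rule big_step_Pr_loop) (auto simp: cnt_def c_def)
  moreover have "out = c + length xs + 2"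
    by (simp add: out_def a)
  moreover have "(t(c + 1 := v 0, cnt := k))(cnt := 0, c := k, c + 1 := v k)
      = t(cnt := 0, c := k, c + 1 := y)"
    using vk by (auto simp: cnt_def c_def fun_eq_iff)
  ultimately have 4: "big_step (Loop cnt (Seq (compile h (a + 1) c) (Seq (clear (c + 1))
      (Seq (move out (c + 1)) (Inc c))))) (t(c + 1 := v 0, cnt := k)) (t(cnt := 0, c := k, c + 1 := y))"
    by simp
  have 5: "big_step (move (c + 1) (b + a)) (t(cnt := 0, c := k, c + 1 := y))
      (t(cnt := 0, c := k, c + 1 := 0, b + a := y))"
    using zero by (intro big_step_eq[OF big_step_move]) (auto simp: t_def cnt_def c_def out_def)
  have 6: "big_step (clear_block c (a + 1)) (t(cnt := 0, c := k, c + 1 := 0, b + a := y))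
      (s(b + a := y))"
    using zero by (intro big_step_eq[OF big_step_clear_block])
      (auto simp: t_def a cnt_def c_def out_def fun_eq_iff)
  show "big_step (compile (Pr n g h) (length xs') b) s (s(b + length xs' := y))"
    using Seq[OF 1 Seq[OF 2 Seq[OF 3 Seq[OF 4 Seq[OF 5 6]]]]]
    by (simp add: a_def cnt_def c_def out_def Let_def)
qed

lemma big_step_Mn_loop:
  assumes P: "\<forall>j\<le>z. computes P c (j # xs) (V j)" and pos: "\<forall>j<z. 0 < V j" and "V z = 0"
    and args: "args_at (0 # xs) c s"
  shows "big_step (Loop (c + length xs + 1) (Seq (clear (c + length xs + 1)) (Seq (Inc c) P)))
    (s(c + length xs + 1 := V 0)) (s(c := z))"
proof -
  let ?out = "c + length xs + 1"
  define \<sigma> where "\<sigma> j = s(c := j, ?out := V j)" for j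
  have s_out: "s ?out = 0"
    using args by (simp add: args_at_def)
  have run: "big_step P (s(c := j)) (\<sigma> j)" if "j \<le> z" for j
  proof -
    have "args_at (j # xs) c (s(c := j))"
      using args by (auto simp: args_at_def nth_Cons')
    then show ?thesis
      using P that unfolding computes_def \<sigma>_def by (simp add: add.assoc)
  qed
  have "big_step (Loop ?out (Seq (clear ?out) (Seq (Inc c) P))) (\<sigma> 0) (\<sigma> z)"
  proof (rule big_step_Loop_trace)
    fix j assume j: "j < z"
    have "big_step (clear ?out) ((\<sigma> j)(?out := \<sigma> j ?out - 1)) (s(c := j))"
      using s_out by (intro big_step_eq[OF big_step_clear]) (auto simp: \<sigma>_def fun_eq_iff)
    moreover have "big_step (Inc c) (s(c := j)) (s(c := Suc j))"
      by (rule big_step_eq[OF Inc]) simp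
    ultimately show "\<sigma> j ?out \<noteq> 0 \<and> big_step (Seq (clear ?out) (Seq (Inc c) P))
        ((\<sigma> j)(?out := \<sigma> j ?out - 1)) (\<sigma> (Suc j))"
      using pos j run[of "Suc j"] by (auto simp: \<sigma>_def intro: Seq)
  qed (simp add: \<sigma>_def \<open>V z = 0\<close>)
  moreover have "\<sigma> 0 = s(?out := V 0)" and "\<sigma> z = s(c := z)"
    using args s_out \<open>V z = 0\<close> by (auto simp: \<sigma>_def args_at_def fun_eq_iff)
  ultimately show ?thesis
    by simp
qed

lemma compile_correct_Mn:
  assumes f: "compile_correct f"
  shows "compile_correct (Mn n f)"
  unfolding compile_correct_def computes_def
proof (intro allI impI)
  fix xs z b s
  assume "eval (Mn n f) xs z" and args: "args_at xs b s"
  then have f_z: "eval f (z # xs) 0" and "\<forall>y<z. \<exists>v>0. eval f (y # xs) v"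
    by (auto elim: eval_MnE)
  then obtain V where "\<forall>y<z. 0 < V y \<and> eval f (y # xs) (V y)"
    by metis
  then have V_pos: "\<forall>j<z. 0 < (V(z := 0)) j" and V_eval: "\<forall>j\<le>z. eval f (j # xs) ((V(z := 0)) j)"
    using f_z by (auto simp: le_less)
  define a c out where "a = length xs" and "c = b + a + 1" and "out = c + a + 1"
  define t where "t = (\<lambda>q. if c + 1 \<le> q \<and> q < out then xs ! (q - (c + 1)) else s q)"
  have s_xs: "\<forall>j<a. s (b + j) = xs ! j" and zero: "\<forall>q\<ge>b + a. s q = 0"
    using args unfolding args_at_def a_def by auto
  have computes_f: "\<forall>j\<le>z. computes (compile f (a + 1) c) c (j # xs) ((V(z := 0)) j)"
    using V_eval by (auto intro!: compile_correctD[OF f] simp: a_def)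
  have args_t: "args_at (0 # xs) c t"
    using zero by (auto simp: args_at_def t_def a_def c_def out_def nth_Cons')
  have "t q = (if c + 1 \<le> q \<and> q < c + 1 + a then s (b + (q - (c + 1))) else s q)" for q
    using s_xs[rule_format, of "q - (c + 1)"] by (auto simp: t_def out_def)
  then have 1: "big_step (copy_block b (c + 1) a out) s t"
    using zero by (intro big_step_eq[OF big_step_copy_block]) (auto simp: c_def out_def fun_eq_iff)
  have 2: "big_step (compile f (a + 1) c) t (t(out := (V(z := 0)) 0))"
    using computes_f[rule_format, of 0] args_t unfolding computes_def by (simp add: a_def out_def)
  have 3: "big_step (Loop out (Seq (clear out) (Seq (Inc c) (compile f (a + 1) c))))
      (t(out := (V(z := 0)) 0)) (t(c := z))"
    using big_step_Mn_loop[OF computes_f V_pos _ args_t] by (simp add: a_def out_def)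
  have 4: "big_step (move c (b + a)) (t(c := z)) (t(c := 0, b + a := z))"
    using zero by (intro big_step_eq[OF big_step_move]) (auto simp: t_def c_def out_def)
  have 5: "big_step (clear_block (c + 1) a) (t(c := 0, b + a := z)) (s(b + a := z))"
    using zero by (intro big_step_eq[OF big_step_clear_block])
      (auto simp: t_def c_def out_def fun_eq_iff)
  show "big_step (compile (Mn n f) (length xs) b) s (s(b + length xs := z))"
    using Seq[OF 1 Seq[OF 2 Seq[OF 3 Seq[OF 4 5]]]] by (simp add: a_def c_def out_def Let_def)
qed

theorem compile_correct: "compile_correct f"
proof (induction f)
  case (Cn n f gs)
  then show ?case by (simp add: compile_correct_Cn)
qed (simp_all add: compile_correct_Z compile_correct_S compile_correct_Id compile_correct_Pr
  compile_correct_Mn)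

section \<open>Loop programs as channel systems\<close>

fun nstates :: "prog \<Rightarrow> nat" where
  "nstates Skip = 1"
| "nstates (Inc r) = 2"
| "nstates (Seq P Q) = nstates P + nstates Q"
| "nstates (Loop r P) = Suc (nstates P)"

fun reg_bound :: "prog \<Rightarrow> nat" where
  "reg_bound Skip = 0"
| "reg_bound (Inc r) = Suc r"
| "reg_bound (Seq P Q) = max (reg_bound P) (reg_bound Q)"
| "reg_bound (Loop r P) = max (Suc r) (reg_bound P)"

text \<open>Register \<open>r\<close> is kept in channel \<open>r + 2\<close> as the word \<open>0\<^sup>n 1\<close>, where \<open>n\<close> is its value;
  channel \<open>1\<close> always holds \<open>[1]\<close> (it is read and rewritten by \<open>Skip\<close>), and channel \<open>0\<close> is
  the input channel, whose letter \<open>2\<close> plays the role of \<open>$\<close>.\<close>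
definition encode_regs :: "nat \<Rightarrow> (nat \<Rightarrow> nat) \<Rightarrow> valuation" where
  "encode_regs NR s = (\<lambda>ch. if ch = 1 then [1]
     else if 2 \<le> ch \<and> ch < NR + 2 then replicate (s (ch - 2)) 0 @ [1] else [])"

lemma encode_regs_upd:
  "r < NR \<Longrightarrow> encode_regs NR (s(r := v)) = (encode_regs NR s)(r + 2 := replicate v 0 @ [1])"
  by (auto simp: encode_regs_def fun_eq_iff)

lemma encode_regs_reg: "r < NR \<Longrightarrow> encode_regs NR s (r + 2) = replicate (s r) 0 @ [1]"
  by (auto simp: encode_regs_def)

text \<open>The transitions of \<open>P\<close> started in state \<open>e\<close> and exiting to state \<open>x\<close>; they use the
  states \<open>e ..< e + nstates P\<close>.  \<open>Inc r\<close> rotates channel \<open>r + 2\<close> until its marker \<open>1\<close> is in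
  front, replaces the marker by \<open>0\<close>, and then appends a new marker, paid for by a \<open>$\<close>.\<close>
fun flatten :: "prog \<Rightarrow> nat \<Rightarrow> nat \<Rightarrow> trans set" where
  "flatten Skip e x = {(e, 1, Some 1, 1, Some 1, x)}"
| "flatten (Inc r) e x = {(e, r + 2, Some 0, r + 2, Some 0, e),
     (e, r + 2, Some 1, r + 2, Some 0, Suc e), (Suc e, 0, Some 2, r + 2, Some 1, x)}"
| "flatten (Seq P Q) e x = flatten P e (e + nstates P) \<union> flatten Q (e + nstates P) x"
| "flatten (Loop r P) e x = {(e, r + 2, Some 0, r + 2, None, Suc e),
     (e, r + 2, Some 1, r + 2, Some 1, x)} \<union> flatten P (Suc e) e"

text \<open>Steps in which the input channel is an inexhaustible source of \<open>$\<close>: a transition reading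
  \<open>$\<close> from channel \<open>0\<close> fires without a preceding \<open>\<lambda>\<close>-transition that writes it.\<close>
definition closed_step :: "trans set \<Rightarrow> nat \<times> valuation \<Rightarrow> nat \<times> valuation \<Rightarrow> bool" where
  "closed_step D C C' \<longleftrightarrow> (\<exists>c a c' a'. (fst C, c, Some a, c', a', fst C') \<in> D \<and>
     ((c = 0 \<and> a = 2 \<and> c' \<noteq> 0 \<and> snd C' = (snd C)(c' := snd C c' @ opt_word a')) \<or>
      (c \<noteq> 0 \<and> c' = c \<and> (\<exists>w. snd C c = a # w \<and> snd C' = (snd C)(c := w @ opt_word a')))))"

lemma closed_steps_mono: "D \<subseteq> D' \<Longrightarrow> (closed_step D)\<^sup>*\<^sup>* C C' \<Longrightarrow> (closed_step D')\<^sup>*\<^sup>* C C'"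
  unfolding closed_step_def by (erule rtranclp_mono[THEN predicate2D, rotated]) blast

lemma closed_step_read:
  "(q, c, Some a, c, a', q') \<in> D \<Longrightarrow> c \<noteq> 0 \<Longrightarrow> \<nu> c = a # w \<Longrightarrow> \<nu>' = \<nu>(c := w @ opt_word a')
  \<Longrightarrow> closed_step D (q, \<nu>) (q', \<nu>')"
  unfolding closed_step_def by (intro exI[of _ c] exI[of _ a] exI[of _ c] exI[of _ a']) auto

lemma closed_step_write:
  "(q, 0, Some 2, c', Some l, q') \<in> D \<Longrightarrow> c' \<noteq> 0 \<Longrightarrow> \<nu>' = \<nu>(c' := \<nu> c' @ [l])
  \<Longrightarrow> closed_step D (q, \<nu>) (q', \<nu>')"
  unfolding closed_step_def by force

lemma closed_steps_rotate:
  assumes "(e, ch, Some 0, ch, Some 0, e) \<in> D" "ch \<noteq> 0"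
  shows "(closed_step D)\<^sup>*\<^sup>* (e, \<nu>(ch := replicate j 0 @ ws)) (e, \<nu>(ch := ws @ replicate j 0))"
proof (induction j arbitrary: ws)
  case 0
  then show ?case by simp
next
  case (Suc j)
  have "closed_step D (e, \<nu>(ch := replicate (Suc j) 0 @ ws)) (e, \<nu>(ch := replicate j 0 @ (ws @ [0])))"
    using assms by (intro closed_step_read) auto
  moreover have "ws @ [0] @ replicate j 0 = ws @ replicate (Suc j) 0"
    by (simp add: replicate_append_same)
  ultimately show ?case
    using Suc.IH[of "ws @ [0]"] by (metis append.assoc converse_rtranclp_into_rtranclp)
qed

lemma closed_steps_flatten_Inc:
  assumes r: "r < NR"
  shows "(closed_step (flatten (Inc r) e x))\<^sup>*\<^sup>* (e, encode_regs NR s)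
    (x, encode_regs NR (s(r := Suc (s r))))"
proof -
  let ?\<nu> = "encode_regs NR s"
  have "(closed_step (flatten (Inc r) e x))\<^sup>*\<^sup>* (e, ?\<nu>(r + 2 := replicate (s r) 0 @ [1]))
      (e, ?\<nu>(r + 2 := [1] @ replicate (s r) 0))"
    by (rule closed_steps_rotate) auto
  then have 1: "(closed_step (flatten (Inc r) e x))\<^sup>*\<^sup>* (e, ?\<nu>)
      (e, ?\<nu>(r + 2 := [1] @ replicate (s r) 0))"
    using encode_regs_reg[OF r, of s] by (metis fun_upd_triv)
  have 2: "closed_step (flatten (Inc r) e x) (e, ?\<nu>(r + 2 := [1] @ replicate (s r) 0))
      (Suc e, ?\<nu>(r + 2 := replicate (Suc (s r)) 0))"
    by (rule closed_step_read) (auto simp: replicate_append_same)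
  have 3: "closed_step (flatten (Inc r) e x) (Suc e, ?\<nu>(r + 2 := replicate (Suc (s r)) 0))
      (x, encode_regs NR (s(r := Suc (s r))))"
    by (rule closed_step_write) (auto simp: encode_regs_upd[OF r])
  show ?thesis
    using 1 2 3 by (meson rtranclp.rtrancl_into_rtrancl)
qed

theorem flatten_simulates:
  "big_step P s s' \<Longrightarrow> reg_bound P \<le> NR \<Longrightarrow>
    (closed_step (flatten P e x))\<^sup>*\<^sup>* (e, encode_regs NR s) (x, encode_regs NR s')"
proof (induction arbitrary: e x rule: big_step.induct)
  case (Skip s)
  have "closed_step (flatten Skip e x) (e, encode_regs NR s) (x, encode_regs NR s)"
    by (rule closed_step_read[where w = "[]"]) (auto simp: encode_regs_def)
  then show ?case by auto
next
  case (Inc r s)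
  then show ?case
    by (intro closed_steps_flatten_Inc) simp
next
  case (Seq P s s' Q s'')
  then have "(closed_step (flatten P e (e + nstates P)))\<^sup>*\<^sup>* (e, encode_regs NR s)
      (e + nstates P, encode_regs NR s')"
    and "(closed_step (flatten Q (e + nstates P) x))\<^sup>*\<^sup>* (e + nstates P, encode_regs NR s')
      (x, encode_regs NR s'')"
    by auto
  then show ?case
    by (auto intro: closed_steps_mono rtranclp_trans)
next
  case (Loop_zero s r P)
  have "closed_step (flatten (Loop r P) e x) (e, encode_regs NR s) (x, encode_regs NR s)"
    using Loop_zero by (intro closed_step_read[where w = "[]"]) (auto simp: encode_regs_def)
  then show ?case by auto
next
  case (Loop_Suc s r k P s' s'')
  then have r: "r < NR" by simp
  have 1: "closed_step (flatten (Loop r P) e x) (e, encode_regs NR s)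
      (Suc e, encode_regs NR (s(r := k)))"
    using Loop_Suc encode_regs_reg[OF r, of s] r
    by (intro closed_step_read[where w = "replicate k 0 @ [1]"]) (auto simp: encode_regs_upd)
  have "(closed_step (flatten P (Suc e) e))\<^sup>*\<^sup>* (Suc e, encode_regs NR (s(r := k)))
      (e, encode_regs NR s')"
    using Loop_Suc.IH(1) Loop_Suc.prems by (simp del: fun_upd_apply)
  then have 2: "(closed_step (flatten (Loop r P) e x))\<^sup>*\<^sup>* (Suc e, encode_regs NR (s(r := k)))
      (e, encode_regs NR s')"
    by (rule closed_steps_mono[rotated]) auto
  have 3: "(closed_step (flatten (Loop r P) e x))\<^sup>*\<^sup>* (e, encode_regs NR s') (x, encode_regs NR s'')"
    using Loop_Suc by auto
  show ?case
    using 1 2 3 by (meson converse_rtranclp_into_rtranclp rtranclp_trans)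
qed

lemma nstates_pos: "0 < nstates P"
  by (induction P) auto

lemma flatten_shape:
  "(q, c, a, c', a', q') \<in> flatten P e x \<Longrightarrow>
    e \<le> q \<and> q < e + nstates P \<and> (e \<le> q' \<and> q' < e + nstates P \<or> q' = x) \<and>
    a \<in> Some ` {0, 1, 2} \<and> a' \<in> {None, Some 0, Some 1} \<and> c < reg_bound P + 2 \<and> c' < reg_bound P + 2 \<and>
    (c = 0 \<and> a = Some 2 \<and> c' \<noteq> 0 \<or> c \<noteq> 0 \<and> c' = c)"
proof (induction P arbitrary: e x)
  case (Seq P Q)
  then show ?case
    using nstates_pos[of P] nstates_pos[of Q] by (fastforce simp: max_def split: if_splits)
next
  case (Loop r P)
  then show ?case
    using nstates_pos[of P] by (fastforce simp: max_def split: if_splits)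
qed auto

definition deterministic :: "trans set \<Rightarrow> bool" where
  "deterministic D \<longleftrightarrow> (\<forall>q c1 a1 c1' b1 q1 c2 a2 c2' b2 q2. (q, c1, Some a1, c1', b1, q1) \<in> D \<longrightarrow>
     (q, c2, Some a2, c2', b2, q2) \<in> D \<longrightarrow>
     (c1, a1, c1', b1, q1) = (c2, a2, c2', b2, q2) \<or> c1 = c2 \<and> c1 \<noteq> 0 \<and> a1 \<noteq> a2)"

lemma deterministic_Un:
  assumes dA: "deterministic A" and dB: "deterministic B" and disj: "fst ` A \<inter> fst ` B = {}"
  shows "deterministic (A \<union> B)"
  unfolding deterministic_def
proof (intro allI impI)
  fix q c1 a1 c1' b1 q1 c2 a2 c2' b2 q2
  assume 1: "(q, c1, Some a1, c1', b1, q1) \<in> A \<union> B" and 2: "(q, c2, Some a2, c2', b2, q2) \<in> A \<union> B"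
  show "(c1, a1, c1', b1, q1) = (c2, a2, c2', b2, q2) \<or> c1 = c2 \<and> c1 \<noteq> 0 \<and> a1 \<noteq> a2"
  proof (cases "q \<in> fst ` A")
    case True
    then have "q \<notin> fst ` B"
      using disj by blast
    then have "(q, c1, Some a1, c1', b1, q1) \<in> A" "(q, c2, Some a2, c2', b2, q2) \<in> A"
      using 1 2 by (auto intro: rev_image_eqI)
    then show ?thesis
      using dA unfolding deterministic_def by blast
  next
    case False
    then have "(q, c1, Some a1, c1', b1, q1) \<in> B" "(q, c2, Some a2, c2', b2, q2) \<in> B"
      using 1 2 by (auto intro: rev_image_eqI)
    then show ?thesis
      using dB unfolding deterministic_def by blast
  qed
qed

lemma flatten_sources: "fst ` flatten P e x \<subseteq> {e..<e + nstates P}"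
proof
  fix q assume "q \<in> fst ` flatten P e x"
  then obtain c a c' a' q' where "(q, c, a, c', a', q') \<in> flatten P e x"
    by force
  then show "q \<in> {e..<e + nstates P}"
    by (auto dest: flatten_shape)
qed

lemma deterministic_flatten: "deterministic (flatten P e x)"
proof (induction P arbitrary: e x)
  case (Seq P Q)
  have "fst ` flatten P e (e + nstates P) \<inter> fst ` flatten Q (e + nstates P) x = {}"
    using flatten_sources[of P e] flatten_sources[of Q "e + nstates P" x] by fastforce
  then show ?case
    using Seq.IH by (simp add: deterministic_Un)
next
  case (Loop r P)
  have "fst ` {(e, r + 2, Some 0, r + 2, None, Suc e), (e, r + 2, Some 1, r + 2, Some 1, x)}
      \<inter> fst ` flatten P (Suc e) e = {}"
    using flatten_sources[of P "Suc e" e] by fastforce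
  moreover have
    "deterministic {(e, r + 2, Some 0, r + 2, None, Suc e), (e, r + 2, Some 1, r + 2, Some 1, x)}"
    by (auto simp: deterministic_def)
  ultimately show ?case
    using Loop.IH unfolding flatten.simps by (blast intro: deterministic_Un)
qed (auto simp: deterministic_def)

lemma closed_step_deterministic:
  assumes "deterministic D" "closed_step D C C1" "closed_step D C C2"
  shows "C1 = C2"
proof -
  obtain q \<nu> q1 \<nu>1 q2 \<nu>2 where C: "C = (q, \<nu>)" "C1 = (q1, \<nu>1)" "C2 = (q2, \<nu>2)"
    by (cases C, cases C1, cases C2)
  from assms(2) obtain c1 a1 c1' b1 where t1: "(q, c1, Some a1, c1', b1, q1) \<in> D"
    "c1 = 0 \<and> a1 = 2 \<and> c1' \<noteq> 0 \<and> \<nu>1 = \<nu>(c1' := \<nu> c1' @ opt_word b1) \<or>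
     c1 \<noteq> 0 \<and> c1' = c1 \<and> (\<exists>w. \<nu> c1 = a1 # w \<and> \<nu>1 = \<nu>(c1 := w @ opt_word b1))"
    unfolding closed_step_def C by auto
  from assms(3) obtain c2 a2 c2' b2 where t2: "(q, c2, Some a2, c2', b2, q2) \<in> D"
    "c2 = 0 \<and> a2 = 2 \<and> c2' \<noteq> 0 \<and> \<nu>2 = \<nu>(c2' := \<nu> c2' @ opt_word b2) \<or>
     c2 \<noteq> 0 \<and> c2' = c2 \<and> (\<exists>w. \<nu> c2 = a2 # w \<and> \<nu>2 = \<nu>(c2 := w @ opt_word b2))"
    unfolding closed_step_def C by auto
  from assms(1) t1(1) t2(1)
  have "(c1, a1, c1', b1, q1) = (c2, a2, c2', b2, q2) \<or> c1 = c2 \<and> c1 \<noteq> 0 \<and> a1 \<noteq> a2"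
    unfolding deterministic_def by blast
  then show ?thesis
  proof
    assume "(c1, a1, c1', b1, q1) = (c2, a2, c2', b2, q2)"
    then show ?thesis
      using t1(2) t2(2) C by auto
  next
    assume "c1 = c2 \<and> c1 \<noteq> 0 \<and> a1 \<noteq> a2"
    then show ?thesis
      using t1(2) t2(2) by auto
  qed
qed

lemma rtranclp_deterministic_to_stuck:
  assumes det: "\<And>x y z. R x y \<Longrightarrow> R x z \<Longrightarrow> y = z" and "R\<^sup>*\<^sup>* a b" and stuck: "\<And>c. \<not> R b c"
  shows "R\<^sup>*\<^sup>* a c \<Longrightarrow> R\<^sup>*\<^sup>* c b"
proof (induction rule: rtranclp_induct)
  case base
  then show ?case by (rule assms(2))
next
  case (step c' c)
  from step.IH have "c' = b \<or> (\<exists>d. R c' d \<and> R\<^sup>*\<^sup>* d b)"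
    by (metis converse_rtranclpE)
  then show ?case
    using step.hyps(2) stuck det by metis
qed

section \<open>Runs that ignore the input channel\<close>

definition erase_input :: "nat \<times> valuation \<Rightarrow> nat \<times> valuation" where
  "erase_input C = (fst C, (snd C)(0 := []))"

definition input_separated :: "trans set \<Rightarrow> bool" where
  "input_separated D \<longleftrightarrow> (\<forall>q c a c' a' q'. (q, c, a, c', a', q') \<in> D \<longrightarrow>
     a = None \<and> c = 0 \<and> c' = 0 \<and> a' = Some 2 \<and> q' = q \<or> c = 0 \<and> a = Some 2 \<and> c' \<noteq> 0 \<or>
     c \<noteq> 0 \<and> c' = c \<and> a \<noteq> None)"

lemma step_erase_input:
  assumes sep: "input_separated D" and st: "step D C C'"
  shows "erase_input C = erase_input C' \<or> closed_step D (erase_input C) (erase_input C')"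
proof -
  obtain q \<nu> q' \<nu>' where C: "C = (q, \<nu>)" "C' = (q', \<nu>')"
    by (cases C, cases C')
  from st obtain c a c' a' w where t: "(q, c, a, c', a', q') \<in> D" "\<nu> c = opt_word a @ w"
    "\<nu>' = (if c = c' then \<nu>(c := w @ opt_word a') else \<nu>(c := w, c' := \<nu> c' @ opt_word a'))"
    unfolding step_def C by auto
  from sep t(1) consider "a = None" "c = 0" "c' = 0" "a' = Some 2" "q' = q"
    | "c = 0" "a = Some 2" "c' \<noteq> 0" | b where "c \<noteq> 0" "c' = c" "a = Some b"
    unfolding input_separated_def by blast
  then show ?thesis
  proof cases
    case 1
    then show ?thesis using t C by (auto simp: erase_input_def)
  next
    case 2
    have "closed_step D (q, \<nu>(0 := [])) (q', \<nu>(0 := [], c' := \<nu> c' @ opt_word a'))"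
      unfolding closed_step_def using t(1) 2
      by (intro exI[of _ 0] exI[of _ 2] exI[of _ c'] exI[of _ a']) auto
    moreover have "\<nu>'(0 := []) = \<nu>(0 := [], c' := \<nu> c' @ opt_word a')"
      using t(3) 2 by (auto simp: fun_eq_iff)
    ultimately show ?thesis
      using C by (auto simp: erase_input_def)
  next
    case 3
    have "closed_step D (q, \<nu>(0 := [])) (q', \<nu>(0 := [], c := w @ opt_word a'))"
      unfolding closed_step_def using t(1,2) 3
      by (intro exI[of _ c] exI[of _ b] exI[of _ c] exI[of _ a']) auto
    moreover have "\<nu>'(0 := []) = \<nu>(0 := [], c := w @ opt_word a')"
      using t(3) 3 by (auto simp: fun_eq_iff)
    ultimately show ?thesis
      using C by (auto simp: erase_input_def)
  qed
qed

lemma steps_erase_input: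
  assumes "input_separated D"
  shows "(step D)\<^sup>*\<^sup>* C C' \<Longrightarrow> (closed_step D)\<^sup>*\<^sup>* (erase_input C) (erase_input C')"
proof (induction rule: rtranclp_induct)
  case (step C' C'')
  with step_erase_input[OF assms step.hyps(2)] show ?case
    by (metis rtranclp.rtrancl_into_rtrancl)
qed simp

text \<open>Conversely, a closed step from a configuration with empty input channel is simulated by
  writing \<open>$\<close> with the \<open>\<lambda>\<close>-transition of its source state and consuming it at once.\<close>
lemma closed_step_steps:
  assumes idle: "\<And>q c a c' a' q'. (q, c, a, c', a', q') \<in> D \<Longrightarrow> (q, 0, None, 0, Some 2, q) \<in> D"
    and cs: "closed_step D C C'" and empty: "snd C 0 = []"
  shows "(step D)\<^sup>*\<^sup>* C C' \<and> snd C' 0 = []"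
proof -
  obtain q \<nu> q' \<nu>' where C: "C = (q, \<nu>)" "C' = (q', \<nu>')"
    by (cases C, cases C')
  from cs obtain c a c' a' where t: "(q, c, Some a, c', a', q') \<in> D"
    "c = 0 \<and> a = 2 \<and> c' \<noteq> 0 \<and> \<nu>' = \<nu>(c' := \<nu> c' @ opt_word a') \<or>
     c \<noteq> 0 \<and> c' = c \<and> (\<exists>w. \<nu> c = a # w \<and> \<nu>' = \<nu>(c := w @ opt_word a'))"
    unfolding closed_step_def C by auto
  have e: "\<nu> 0 = []"
    using empty C by simp
  from t(2) show ?thesis
  proof
    assume h: "c = 0 \<and> a = 2 \<and> c' \<noteq> 0 \<and> \<nu>' = \<nu>(c' := \<nu> c' @ opt_word a')"
    have "step D (q, \<nu>) (q, \<nu>(0 := [2]))"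
      unfolding step_def using idle[OF t(1)] e
      by (intro exI[of _ 0] exI[of _ None] exI[of _ 0] exI[of _ "Some 2"] exI[of _ "[]"]) auto
    moreover have "step D (q, \<nu>(0 := [2])) (q', \<nu>')"
      unfolding step_def using t(1) h e
      by (intro exI[of _ 0] exI[of _ "Some 2"] exI[of _ c'] exI[of _ a'] exI[of _ "[]"])
        (auto simp: fun_eq_iff)
    ultimately show ?thesis
      using h e C by auto
  next
    assume h: "c \<noteq> 0 \<and> c' = c \<and> (\<exists>w. \<nu> c = a # w \<and> \<nu>' = \<nu>(c := w @ opt_word a'))"
    then obtain w where w: "\<nu> c = a # w" "\<nu>' = \<nu>(c := w @ opt_word a')"
      by auto
    have "step D (q, \<nu>) (q', \<nu>')"
      unfolding step_def using t(1) h w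
      by (intro exI[of _ c] exI[of _ "Some a"] exI[of _ c] exI[of _ a'] exI[of _ w]) auto
    then show ?thesis
      using C h w e by auto
  qed
qed

lemma closed_steps_steps:
  assumes idle: "\<And>q c a c' a' q'. (q, c, a, c', a', q') \<in> D \<Longrightarrow> (q, 0, None, 0, Some 2, q) \<in> D"
    and steps: "(closed_step D)\<^sup>*\<^sup>* C C'" and empty: "snd C 0 = []"
  shows "(step D)\<^sup>*\<^sup>* C C'"
proof -
  from steps have "(step D)\<^sup>*\<^sup>* C C' \<and> snd C' 0 = []"
  proof (induction rule: rtranclp_induct)
    case base
    then show ?case using empty by simp
  next
    case (step C' C'')
    then have "(step D)\<^sup>*\<^sup>* C C'" and "snd C' 0 = []"
      by auto
    with closed_step_steps[OF idle step.hyps(2)] show ?case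
      by (auto intro: rtranclp_trans)
  qed
  then show ?thesis ..
qed

section \<open>The diagonal instance\<close>

definition nregs :: "prog \<Rightarrow> nat" where
  "nregs P = max 2 (reg_bound P)"

text \<open>After running \<open>P\<close>, state \<open>nstates P\<close> tests register \<open>1\<close>: if it is nonzero the system moves to
  the dead state \<open>nstates P + 1\<close>, otherwise to the accepting state \<open>nstates P + 2\<close>.\<close>
definition ocs_trans :: "prog \<Rightarrow> trans set" where
  "ocs_trans P = flatten P 0 (nstates P) \<union>
     {(nstates P, 3, Some 0, 3, None, nstates P + 1),
      (nstates P, 3, Some 1, 3, Some 1, nstates P + 2)} \<union>
     {(q, 0, None, 0, Some 2, q) | q. q < nstates P + 3}"

definition ocs_states :: "prog \<Rightarrow> nat set" where
  "ocs_states P = {0..<nstates P + 3}"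

definition ocs_channels :: "prog \<Rightarrow> nat set" where
  "ocs_channels P = {0..<nregs P + 2}"

definition ocs_config :: "prog \<Rightarrow> nat \<Rightarrow> (nat \<Rightarrow> nat) \<Rightarrow> nat \<times> valuation" where
  "ocs_config P q s = (q, encode_regs (nregs P) s)"

lemma ocs_trans_cases:
  assumes "(q, c, a, c', a', q') \<in> ocs_trans P"
  obtains (flatten) "(q, c, a, c', a', q') \<in> flatten P 0 (nstates P)"
  | (test) "q = nstates P" "c = 3" "c' = 3"
    "(a, a', q') \<in> {(Some 0, None, nstates P + 1), (Some 1, Some 1, nstates P + 2)}"
  | (idle) "q < nstates P + 3" "c = 0" "a = None" "c' = 0" "a' = Some 2" "q' = q"
  using assms unfolding ocs_trans_def by blast

lemma ocs_trans_flatten: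
  assumes "(q, c, a, c', a', q') \<in> flatten P 0 (nstates P)"
  shows "q < nstates P" "q' \<le> nstates P" "a \<in> Some ` {0, 1, 2}" "a' \<in> {None, Some 0, Some 1}"
    "c < nregs P + 2" "c' < nregs P + 2" "c = 0 \<and> a = Some 2 \<and> c' \<noteq> 0 \<or> c \<noteq> 0 \<and> c' = c"
  using flatten_shape[OF assms] by (auto simp: nregs_def)

lemma is_pOCS_ocs: "is_pOCS (ocs_states P) (ocs_channels P) 0 {0, 1, 2} 2 (ocs_trans P) (\<lambda>_ _. 1)"
  unfolding is_pOCS_def
proof (intro conjI)
  show "ocs_trans P \<subseteq> ocs_states P \<times> ocs_channels P \<times> insert None (Some ` {0, 1, 2}) \<times> ocs_channels P
      \<times> insert None (Some ` {0, 1, 2}) \<times> ocs_states P"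
    by (clarify, erule ocs_trans_cases)
      (auto simp: ocs_states_def ocs_channels_def nregs_def dest: ocs_trans_flatten)
qed (auto simp: ocs_states_def ocs_channels_def ocs_trans_def dest: ocs_trans_flatten
  split: prod.splits)

lemma is_config_ocs_config:
  "q < nstates P + 3 \<Longrightarrow> is_config (ocs_states P) (ocs_channels P) {0, 1, 2} (ocs_config P q s)"
  by (auto simp: is_config_def ocs_config_def ocs_states_def ocs_channels_def encode_regs_def)

lemma input_separated_ocs_trans: "input_separated (ocs_trans P)"
  unfolding input_separated_def
  by (auto elim!: ocs_trans_cases dest: ocs_trans_flatten)

lemma ocs_trans_idle: "(q, c, a, c', a', q') \<in> ocs_trans P \<Longrightarrow> (q, 0, None, 0, Some 2, q) \<in> ocs_trans P"
  by (erule ocs_trans_cases) (auto simp: ocs_trans_def dest: ocs_trans_flatten)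

lemma deterministic_ocs_trans: "deterministic (ocs_trans P)"
proof -
  have "deterministic (flatten P 0 (nstates P) \<union>
      {(nstates P, 3, Some 0, 3, None, nstates P + 1),
       (nstates P, 3, Some 1, 3, Some 1, nstates P + 2)})"
    using flatten_sources[of P 0 "nstates P"]
    by (intro deterministic_Un deterministic_flatten) (auto simp: deterministic_def)
  then show ?thesis
    unfolding ocs_trans_def deterministic_def by blast
qed

lemma ocs_final_stuck: "q \<in> {nstates P + 1, nstates P + 2} \<Longrightarrow> \<not> closed_step (ocs_trans P) (q, \<nu>) C"
  unfolding closed_step_def by (auto elim!: ocs_trans_cases dest: ocs_trans_flatten)

lemma closed_steps_ocs_run:
  assumes "big_step P s t"
  shows "(closed_step (ocs_trans P))\<^sup>*\<^sup>* (ocs_config P 0 s) (ocs_config P (nstates P) t)"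
proof -
  have "(closed_step (flatten P 0 (nstates P)))\<^sup>*\<^sup>* (ocs_config P 0 s) (ocs_config P (nstates P) t)"
    unfolding ocs_config_def using assms by (intro flatten_simulates) (auto simp: nregs_def)
  then show ?thesis
    by (rule closed_steps_mono[rotated]) (auto simp: ocs_trans_def)
qed

lemma erase_input_ocs_config: "erase_input (ocs_config P q s) = ocs_config P q s"
  by (auto simp: erase_input_def ocs_config_def encode_regs_def fun_eq_iff)

lemma ocs_accept_reachable:
  assumes run: "big_step P s (\<lambda>_. 0)"
  shows "reachable (ocs_trans P) (ocs_config P 0 s) (ocs_config P (nstates P + 2) (\<lambda>_. 0))"
proof -
  let ?D = "ocs_trans P" and ?init = "ocs_config P 0 s"
    and ?accept = "ocs_config P (nstates P + 2) (\<lambda>_. 0)"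
  have "encode_regs (nregs P) (\<lambda>_. 0) 3 = [1]"
    by (simp add: encode_regs_def nregs_def)
  then have "closed_step ?D (ocs_config P (nstates P) (\<lambda>_. 0)) ?accept"
    unfolding ocs_config_def
    by (intro closed_step_read[where c = 3 and a = 1 and a' = "Some 1" and w = "[]"])
      (auto simp: ocs_trans_def fun_eq_iff)
  with closed_steps_ocs_run[OF run] have path: "(closed_step ?D)\<^sup>*\<^sup>* ?init ?accept"
    by (rule rtranclp.rtrancl_into_rtrancl)
  have "snd ?init 0 = []"
    by (simp add: ocs_config_def encode_regs_def)
  with ocs_trans_idle path show ?thesis
    unfolding reachable_def by (rule closed_steps_steps)
qed

lemma ocs_accept_unreachable:
  assumes run: "big_step P s t" and "t 1 \<noteq> 0"
  shows "\<not> reachable (ocs_trans P) (ocs_config P 0 s) (ocs_config P (nstates P + 2) (\<lambda>_. 0))"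
proof
  let ?D = "ocs_trans P" and ?init = "ocs_config P 0 s"
    and ?accept = "ocs_config P (nstates P + 2) (\<lambda>_. 0)"
  assume reach: "reachable ?D ?init ?accept"
  obtain n where n: "t 1 = Suc n"
    using \<open>t 1 \<noteq> 0\<close> not0_implies_Suc by blast
  define B where "B = (nstates P + 1, (encode_regs (nregs P) t)(3 := replicate n 0 @ [1]))"
  have "encode_regs (nregs P) t 3 = replicate (t 1) 0 @ [1]"
    using encode_regs_reg[of 1 "nregs P" t] by (simp add: nregs_def numeral_3_eq_3)
  then have "closed_step ?D (ocs_config P (nstates P) t) B"
    using n unfolding B_def ocs_config_def
    by (intro closed_step_read[where c = 3 and a = 0 and a' = None]) (auto simp: ocs_trans_def)
  with closed_steps_ocs_run[OF run] have to_B: "(closed_step ?D)\<^sup>*\<^sup>* ?init B"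
    by (rule rtranclp.rtrancl_into_rtrancl)
  have to_accept: "(closed_step ?D)\<^sup>*\<^sup>* ?init ?accept"
    using steps_erase_input[OF input_separated_ocs_trans reach[unfolded reachable_def]]
    by (simp add: erase_input_ocs_config)
  have B_stuck: "\<not> closed_step ?D B C" for C
    unfolding B_def by (rule ocs_final_stuck) simp
  \<comment> \<open>the closed run from the initial configuration is unique and gets stuck in \<open>B\<close>\<close>
  have "(closed_step ?D)\<^sup>*\<^sup>* ?accept B"
    using closed_step_deterministic[OF deterministic_ocs_trans] to_B B_stuck to_accept
    by (rule rtranclp_deterministic_to_stuck)
  moreover have "\<not> closed_step ?D ?accept C" for C
    unfolding ocs_config_def by (rule ocs_final_stuck) simp
  ultimately have "?accept = B"
    by (blast elim: converse_rtranclpE)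
  then show False
    by (simp add: B_def ocs_config_def)
qed

theorem reachable_ocs_accept_iff:
  assumes run: "big_step P s t" and clean: "\<forall>r. r \<noteq> 1 \<longrightarrow> t r = 0"
  shows "reachable (ocs_trans P) (ocs_config P 0 s) (ocs_config P (nstates P + 2) (\<lambda>_. 0)) \<longleftrightarrow> t 1 = 0"
proof (cases "t 1 = 0")
  case True
  with clean have "t = (\<lambda>_. 0)"
    by (intro ext) metis
  with run True show ?thesis
    using ocs_accept_reachable by blast
qed (use run ocs_accept_unreachable in blast)

definition ocs_code :: "prog \<Rightarrow> nat" where
  "ocs_code P = list_encode [enc_set (ocs_states P), enc_set (ocs_channels P), enc_set {0, 1, 2},
     enc_delta (ocs_trans P),
     list_encode (map (\<lambda>c. list_encode (encode_regs (nregs P) (\<lambda>_. 0) c)) [3..<nregs P + 2]),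
     nstates P + 2, enc_val (ocs_channels P) (encode_regs (nregs P) (\<lambda>_. 0))]"

text \<open>On \<open>ocs_code P\<close>, \<open>rec_instance\<close> computes the code of the instance of \<open>P\<close> whose register \<open>0\<close>
  initially holds \<open>ocs_code P\<close> itself.\<close>
definition rec_instance :: recf where
  "rec_instance = rec_prepend [rec_nth 0, rec_nth 1, Z, rec_nth 2, rec_const 1 2, rec_nth 3, Z,
     rec_prepend [Z, rec_const 1 (list_encode [1]), rec_unary] (rec_nth 4), rec_nth 5, rec_nth 6] Z"

lemma enc_val_ocs_init:
  "enc_val (ocs_channels P) (encode_regs (nregs P) ((\<lambda>_. 0)(0 := m))) =
    list_encode ([0, list_encode [1], list_encode (replicate m 0 @ [1])] @
      map (\<lambda>c. list_encode (encode_regs (nregs P) (\<lambda>_. 0) c)) [3..<nregs P + 2])"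
proof -
  let ?\<nu> = "encode_regs (nregs P) ((\<lambda>_. 0)(0 := m))"
  have "[0..<nregs P + 2] = [0, 1, 2] @ [3..<nregs P + 2]"
    by (simp add: nregs_def upt_conv_Cons numeral_3_eq_3 numeral_2_eq_2)
  then have "enc_val (ocs_channels P) ?\<nu> =
      list_encode (map (\<lambda>c. list_encode (?\<nu> c)) [0, 1, 2] @
        map (\<lambda>c. list_encode (?\<nu> c)) [3..<nregs P + 2])"
    by (simp add: enc_val_def ocs_channels_def del: list_encode.simps)
  moreover have
    "map (\<lambda>c. list_encode (?\<nu> c)) [0, 1, 2] = [0, list_encode [1], list_encode (replicate m 0 @ [1])]"
    by (simp add: encode_regs_def nregs_def del: list_encode.simps(2))
  moreover have "map (\<lambda>c. list_encode (?\<nu> c)) [3..<nregs P + 2] =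
      map (\<lambda>c. list_encode (encode_regs (nregs P) (\<lambda>_. 0) c)) [3..<nregs P + 2]"
    by (auto simp: encode_regs_def)
  ultimately show ?thesis
    by (simp only:)
qed

lemma eval_rec_instance:
  "eval rec_instance [ocs_code P]
    (enc_instance (ocs_states P) (ocs_channels P) 0 {0, 1, 2} 2 (ocs_trans P)
     (ocs_config P 0 ((\<lambda>_. 0)(0 := ocs_code P))) (ocs_config P (nstates P + 2) (\<lambda>_. 0)))"
proof -
  define Rs where "Rs = map (\<lambda>c. list_encode (encode_regs (nregs P) (\<lambda>_. 0) c)) [3..<nregs P + 2]"
  define L where "L = [enc_set (ocs_states P), enc_set (ocs_channels P), enc_set {0, 1, 2},
    enc_delta (ocs_trans P), list_encode Rs, nstates P + 2,
    enc_val (ocs_channels P) (encode_regs (nregs P) (\<lambda>_. 0))]"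
  have nth: "eval (rec_nth j) [ocs_code P] (L ! j)" if "j < 7" for j
    using eval_rec_nth[of j L] that by (simp add: ocs_code_def L_def Rs_def del: list_encode.simps)
  have "eval (rec_nth 4) [ocs_code P] (list_encode Rs)"
    using nth[of 4] by (simp add: L_def)
  then have "eval (rec_prepend [Z, rec_const 1 (list_encode [1]), rec_unary] (rec_nth 4)) [ocs_code P]
      (list_encode ([0, list_encode [1], list_encode (replicate (ocs_code P) 0 @ [1])] @ Rs))"
    using eval_rec_unary[of "ocs_code P"]
    by (intro eval_rec_prepend) (auto intro: eval_Z eval_rec_const simp del: list_encode.simps(2))
  then have "eval rec_instance [ocs_code P] (list_encode ([L ! 0, L ! 1, 0, L ! 2, 2, L ! 3, 0,
      list_encode ([0, list_encode [1], list_encode (replicate (ocs_code P) 0 @ [1])] @ Rs),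
      L ! 5, L ! 6] @ []))"
    unfolding rec_instance_def using nth[of 0] nth[of 1] nth[of 2] nth[of 3] nth[of 5] nth[of 6]
    by (intro eval_rec_prepend) (auto intro: eval_Z eval_rec_const simp del: list_encode.simps(2))
  then show ?thesis
    by (simp add: enc_instance_def ocs_config_def enc_val_ocs_init L_def Rs_def del: list_encode.simps)
qed

theorem proposition6:
  shows "\<not> (\<exists>f. decides_pOCS_reach f)"
proof
  assume "\<exists>f. decides_pOCS_reach f"
  then obtain f where f: "decides_pOCS_reach f" ..
  define h where "h = Cn 1 f [rec_instance]"
  define P where "P = Seq (compile h 1 0) (clear 0)"
  define m where "m = ocs_code P"
  let ?init = "ocs_config P 0 ((\<lambda>_. 0)(0 := m))" and ?accept = "ocs_config P (nstates P + 2) (\<lambda>_. 0)"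
  define v where "v = (if reachable (ocs_trans P) ?init ?accept then 1 else 0 :: nat)"
  have "is_config (ocs_states P) (ocs_channels P) {0, 1, 2} ?init"
    and "is_config (ocs_states P) (ocs_channels P) {0, 1, 2} ?accept"
    by (rule is_config_ocs_config, simp)+
  then have
    "eval f [enc_instance (ocs_states P) (ocs_channels P) 0 {0, 1, 2} 2 (ocs_trans P) ?init ?accept] v"
    using f is_pOCS_ocs unfolding decides_pOCS_reach_def v_def by blast
  then have "eval h [m] v"
    unfolding h_def m_def using eval_rec_instance by (intro eval_Cn1) auto
  then have "computes (compile h 1 0) 0 [m] v"
    by (rule compile_correctD[OF compile_correct]) simp
  then have "big_step (compile h 1 0) ((\<lambda>_. 0)(0 := m)) ((\<lambda>_. 0)(0 := m, 1 := v))"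
    unfolding computes_def args_at_def by auto
  then have "big_step P ((\<lambda>_. 0)(0 := m)) ((\<lambda>_. 0)(1 := v))"
    unfolding P_def by (rule Seq) (rule big_step_eq[OF big_step_clear], auto)
  then have "reachable (ocs_trans P) ?init ?accept \<longleftrightarrow> v = 0"
    using reachable_ocs_accept_iff by fastforce
  then show False
    unfolding v_def by (simp split: if_splits)
qed

end
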